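(* For every weak independence relation $\diamond$ on the analysis instance $\mathcal{D}$, and every sequence of transformers $\sigma\in\mathrm{runs}(\mathcal{D})$, there is a unique configuration $C$ of $\mathcal{U}_{\mathcal{D},\diamond}$ such that $\sigma\in\mathrm{inter}(C)$.
   Context: An analysis instance $\mathcal{D}=\langle D,\sqsubseteq,F,d_0\rangle$ consists of a lattice $\langle D,\sqsubseteq,\sqcup,\sqcap\rangle$ with least element $\bot$, a set $F$ of monotone, bottom-strict transformers, and an initial element $d_0$. A transformer $f$ is enabled at $d$ if $f(d)\neq\bot$. For $\sigma=f_1\ldots f_m$, $\mathrm{state}(\sigma)=(f_m\circ\cdots\circ f_1)(d_0)$; $\sigma$ is a run if $\mathrm{state}(\sigma)\neq\bot$ and $\mathrm{runs}(\mathcal{D})$ is the set of runs; $\mathrm{reach}(\mathcal{D})$ is the set of reachable elements. A relation $\diamond\subseteq F\times F$ is a weak independence if it is symmetric, irreflexive, and $f\diamond f'$ implies $f(f'(d))=f'(f(d))$ for every $d\in\mathrm{reach}(\mathcal{D})$. A labelled prime event structure (PES) is $\langle E,<,\#,h\rangle$ with $<$ a strict partial order with finite down-sets, $\#$ a symmetric irreflexive conflict relation inherited along $<$, and a labelling $h$. A configuration is a finite causally closed, conflict-free set of events. The interleavings $\mathrm{inter}(C)$ are the label sequences of the linearizations of $C$ respecting $<$. The state of $C$, $\mathrm{state}(C)$, is the greatest lower bound (meet) in $D$ of $\{\mathrm{state}(\sigma)\colon\sigma\in\mathrm{inter}(C)\}$. The unfolding $\mathcal{U}_{\mathcal{D},\diamond}$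 is obtained by starting from the empty PES and repeatedly adding events $e=\langle f,C\rangle$, where $C$ is a configuration, $f$ is enabled at $\mathrm{state}(C)$ and $\neg(f\diamond h(e'))$ for every $<$-maximal $e'\in C$; one sets $e'<e$ for all $e'\in C$, $e'\# e$ for all other events $e'\notin C$ with $\neg(f\diamond h(e'))$, and $h(e)=f$; this is saturated until no new event can be added. *)

theory Defs
  imports Main "HOL-Library.FSet"
begin

definition analysis_instance :: "('d::{lattice,order_bot} \<Rightarrow> 'd) set \<Rightarrow> bool" where
  "analysis_instance F \<longleftrightarrow> (\<forall>f\<in>F. mono f \<and> f bot = bot)"

definition seq_state :: "'d \<Rightarrow> ('d \<Rightarrow> 'd) list \<Rightarrow> 'd" where
  "seq_state d0 \<sigma> = fold (\<lambda>f d. f d) \<sigma> d0"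

definition runs :: "('d::{lattice,order_bot} \<Rightarrow> 'd) set \<Rightarrow> 'd \<Rightarrow> ('d \<Rightarrow> 'd) list set" where
  "runs F d0 = {\<sigma>. \<sigma> \<in> lists F \<and> seq_state d0 \<sigma> \<noteq> bot}"

definition reach :: "('d::{lattice,order_bot} \<Rightarrow> 'd) set \<Rightarrow> 'd \<Rightarrow> 'd set" where
  "reach F d0 = seq_state d0 ` runs F d0"

definition weak_indep ::
  "('d::{lattice,order_bot} \<Rightarrow> 'd) set \<Rightarrow> 'd \<Rightarrow> ('d \<Rightarrow> 'd) rel \<Rightarrow> bool" where
  "weak_indep F d0 I \<longleftrightarrow> I \<subseteq> F \<times> F \<and> sym I \<and> irrefl I \<and>
     (\<forall>(f, g)\<in>I. \<forall>d\<in>reach F d0. f (g d) = g (f d))"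

datatype 'f event = Ev (lbl: 'f) (hist: "'f event fset")

definition causes :: "'f event \<Rightarrow> 'f event \<Rightarrow> bool" where
  "causes e' e \<longleftrightarrow> e' |\<in>| hist e"

text \<open>immediate conflict created when the later of the two events was added\<close>
definition dconfl :: "'f rel \<Rightarrow> 'f event \<Rightarrow> 'f event \<Rightarrow> bool" where
  "dconfl I e e' \<longleftrightarrow> e \<noteq> e' \<and> \<not> causes e e' \<and> \<not> causes e' e \<and> (lbl e, lbl e') \<notin> I"

definition confl :: "'f rel \<Rightarrow> 'f event \<Rightarrow> 'f event \<Rightarrow> bool" where
  "confl I e1 e2 \<longleftrightarrow> (\<exists>a b. (a = e1 \<or> causes a e1) \<and> (b = e2 \<or> causes b e2) \<and> dconfl I a b)"

definition is_config :: "'f rel \<Rightarrow> 'f event set \<Rightarrow> bool" where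
  "is_config I X \<longleftrightarrow> finite X \<and> (\<forall>e\<in>X. \<forall>e'. causes e' e \<longrightarrow> e' \<in> X)
     \<and> (\<forall>e\<in>X. \<forall>e'\<in>X. \<not> confl I e e')"

definition interl :: "'f event set \<Rightarrow> 'f list set" where
  "interl X = {map lbl es | es. distinct es \<and> set es = X \<and>
      (\<forall>i j. i < j \<and> j < length es \<longrightarrow> \<not> causes (es ! j) (es ! i))}"

definition conf_state :: "'d::lattice \<Rightarrow> ('d \<Rightarrow> 'd) event set \<Rightarrow> 'd" where
  "conf_state d0 X = Inf_fin (seq_state d0 ` interl X)"

definition is_maximal :: "'f event \<Rightarrow> 'f event set \<Rightarrow> bool" where
  "is_maximal e X \<longleftrightarrow> e \<in> X \<and> \<not> (\<exists>e''\<in>X. causes e e'')"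

inductive_set unf_events :: "('d::{lattice,order_bot} \<Rightarrow> 'd) set \<Rightarrow> 'd \<Rightarrow> ('d \<Rightarrow> 'd) rel
    \<Rightarrow> ('d \<Rightarrow> 'd) event set"
  for F d0 I where
  add: "\<lbrakk> \<forall>e\<in>fset C. e \<in> unf_events F d0 I; is_config I (fset C); f \<in> F;
          f (conf_state d0 (fset C)) \<noteq> bot;
          \<forall>e'\<in>fset C. is_maximal e' (fset C) \<longrightarrow> (f, lbl e') \<notin> I \<rbrakk>
        \<Longrightarrow> Ev f C \<in> unf_events F d0 I"

definition unf_config :: "('d::{lattice,order_bot} \<Rightarrow> 'd) set \<Rightarrow> 'd \<Rightarrow> ('d \<Rightarrow> 'd) rel
    \<Rightarrow> ('d \<Rightarrow> 'd) event set \<Rightarrow> bool" where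
  "unf_config F d0 I X \<longleftrightarrow> X \<subseteq> unf_events F d0 I \<and> is_config I X"

end

theory Submission
  imports Defs
begin

text \<open>If \<open>\<sigma>\<close> is an interleaving of a configuration \<open>X\<close>
  and \<open>\<sigma> f\<close> is a run, the new event for \<open>f\<close> gets as history the dependent past of \<open>f\<close> in \<open>X\<close>:
  the events of \<open>X\<close> below some event whose label is not independent of \<open>f\<close>. Every other event of
  \<open>X\<close> is independent of \<open>f\<close>, so by weak independence it can be commuted behind \<open>f\<close> without changing
  the state; hence \<open>f\<close> is enabled after the dependent past, whose state is well defined because all
  its linearizations reach the same state. Bottom-strictness makes prefixes of runs runs.

  Uniqueness is proved by peeling off the last event \<open>x\<close> of a linearization: in a conflict-free
  configuration every event whose label depends on that of \<open>x\<close> must be a cause of \<open>x\<close>, so the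
  history of \<open>x\<close> is the dependent past of its label in the rest of the configuration, and events are
  determined by label and history.\<close>

definition linearization :: "'f event list \<Rightarrow> 'f event set \<Rightarrow> bool" where
  "linearization es X \<longleftrightarrow> distinct es \<and> set es = X \<and> sorted_wrt (\<lambda>a b. \<not> causes b a) es"

definition dependent_past :: "'f rel \<Rightarrow> 'f \<Rightarrow> 'f event set \<Rightarrow> 'f event set" where
  "dependent_past I f X = {y \<in> X. \<exists>d\<in>X. (f, lbl d) \<notin> I \<and> (y = d \<or> causes y d)}"

lemma interl_eq_linearizations: "interl X = map lbl ` {es. linearization es X}"
  unfolding interl_def linearization_def sorted_wrt_iff_nth_less by blast

lemma linearization_snoc:
  "linearization (es @ [x]) X \<longleftrightarrow>
     x \<in> X \<and> linearization es (X - {x}) \<and> (\<forall>y\<in>X - {x}. \<not> causes x y)"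
  unfolding linearization_def sorted_wrt_append by auto

lemma linearization_remove:
  assumes "linearization (a @ x # b) X"
  shows "linearization (a @ b) (X - {x})"
proof -
  have d: "distinct (a @ x # b)" and s: "set (a @ x # b) = X"
    and o: "sorted_wrt (\<lambda>a b. \<not> causes b a) (a @ x # b)"
    using assms unfolding linearization_def by blast+
  have "distinct (a @ b)" "set (a @ b) = X - {x}" using d s by auto
  moreover have "sorted_wrt (\<lambda>a b. \<not> causes b a) (a @ b)"
    using o by (simp add: sorted_wrt_append)
  ultimately show ?thesis unfolding linearization_def by blast
qed

lemma seq_state_append: "seq_state d0 (a @ b) = seq_state (seq_state d0 a) b"
  by (simp add: seq_state_def)

lemma seq_state_bot:
  assumes "analysis_instance F" and "set b \<subseteq> F"
  shows "seq_state bot b = bot"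
  using assms(2)
proof (induction b)
  case Nil
  then show ?case by (simp add: seq_state_def)
next
  case (Cons f b)
  then have "f bot = bot" using assms(1) by (auto simp: analysis_instance_def)
  with Cons show ?case by (simp add: seq_state_def)
qed

lemma seq_state_prefix_not_bot:
  assumes "analysis_instance F" and "set b \<subseteq> F" and "seq_state d0 (a @ b) \<noteq> bot"
  shows "seq_state d0 a \<noteq> bot"
  using assms seq_state_bot seq_state_append by metis

lemma seq_state_swap_indep:
  assumes AI: "analysis_instance F" and WI: "weak_indep F d0 I"
    and fg: "(f, g) \<in> I" and a: "set a \<subseteq> F"
  shows "seq_state d0 (a @ f # g # c) = seq_state d0 (a @ g # f # c)"
proof -
  define d where "d = seq_state d0 a"
  have "g (f d) = f (g d)"
  proof (cases "d = bot")
    case True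
    have "f \<in> F" "g \<in> F" using fg WI by (auto simp: weak_indep_def)
    then have "f bot = bot" "g bot = bot" using AI by (auto simp: analysis_instance_def)
    with True show ?thesis by simp
  next
    case False
    then have "d \<in> reach F d0" using a unfolding reach_def runs_def d_def by auto
    then show ?thesis using WI fg unfolding weak_indep_def by auto
  qed
  then show ?thesis
    unfolding seq_state_append[of d0 a] d_def[symmetric] by (simp add: seq_state_def)
qed

lemma seq_state_move_indep:
  assumes AI: "analysis_instance F" and WI: "weak_indep F d0 I"
    and "\<forall>z\<in>set b. (x, z) \<in> I" and "set a \<subseteq> F" and "set b \<subseteq> F"
  shows "seq_state d0 (a @ x # b) = seq_state d0 (a @ b @ [x])"
  using assms(3-)
proof (induction b arbitrary: a)
  case Nil
  then show ?case by simp
next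
  case (Cons z b)
  have "seq_state d0 (a @ x # z # b) = seq_state d0 ((a @ [z]) @ x # b)"
    using seq_state_swap_indep[OF AI WI] Cons.prems by auto
  also have "\<dots> = seq_state d0 ((a @ [z]) @ b @ [x])"
    using Cons by (intro Cons.IH) auto
  finally show ?case by simp
qed

subsection \<open>All linearizations of a conflict-free set reach the same state\<close>

text \<open>The last event \<open>x\<close> of \<open>es\<close> can be moved to the end of \<open>es'\<close>: the events after it in \<open>es'\<close>
  are not causally related to \<open>x\<close>, so by conflict-freeness their labels are independent of its label.\<close>
lemma seq_state_linearizations_eq:
  assumes AI: "analysis_instance F" and WI: "weak_indep F d0 I"
    and "lbl ` X \<subseteq> F" and "\<forall>e\<in>X. \<forall>e'\<in>X. \<not> confl I e e'"
    and "linearization es X" and "linearization es' X"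
  shows "seq_state d0 (map lbl es) = seq_state d0 (map lbl es')"
  using assms(3-)
proof (induction es arbitrary: es' X rule: rev_induct)
  case Nil
  then show ?case by (simp add: linearization_def)
next
  case (snoc x es)
  have x: "x \<in> X" "linearization es (X - {x})" "\<forall>y\<in>X - {x}. \<not> causes x y"
    using snoc.prems(3) by (simp_all add: linearization_snoc)
  have "x \<in> set es'" using x(1) snoc.prems(4) by (simp add: linearization_def)
  then obtain a b where es': "es' = a @ x # b" by (meson split_list)
  have ab: "set a \<subseteq> X" "set b \<subseteq> X" using snoc.prems(4) unfolding es' linearization_def by auto
  have rest: "linearization (a @ b) (X - {x})"
    using snoc.prems(4) unfolding es' by (rule linearization_remove)
  have indep: "\<forall>z\<in>set (map lbl b). (lbl x, z) \<in> I"
  proof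
    fix z' assume "z' \<in> set (map lbl b)"
    then obtain z where z: "z \<in> set b" "z' = lbl z" by auto
    have "z \<noteq> x" "\<not> causes z x"
      using snoc.prems(4) z unfolding es' linearization_def by (auto simp: sorted_wrt_append)
    moreover have "\<not> confl I x z" using snoc.prems(2) x(1) z ab(2) by auto
    ultimately show "(lbl x, z') \<in> I"
      using x(3) z ab(2) unfolding confl_def dconfl_def by blast
  qed
  have IH: "seq_state d0 (map lbl es) = seq_state d0 (map lbl (a @ b))"
    using snoc.prems(1,2) by (intro snoc.IH[OF _ _ x(2) rest]) auto
  have "set (map lbl a) \<subseteq> F" "set (map lbl b) \<subseteq> F" using snoc.prems(1) ab(1,2) by auto
  then have "seq_state d0 (map lbl a @ lbl x # map lbl b) = seq_state d0 (map lbl a @ map lbl b @ [lbl x])"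
    by (rule seq_state_move_indep[OF AI WI indep])
  then have "seq_state d0 (map lbl es') = seq_state d0 (map lbl (a @ b) @ [lbl x])"
    unfolding es' by simp
  also have "\<dots> = seq_state d0 (map lbl es @ [lbl x])"
    by (simp only: seq_state_append IH)
  finally show ?case by simp
qed

lemma conf_state_eq_seq_state:
  assumes "analysis_instance F" and "weak_indep F d0 I"
    and "lbl ` X \<subseteq> F" and "\<forall>e\<in>X. \<forall>e'\<in>X. \<not> confl I e e'" and "linearization es X"
  shows "conf_state d0 X = seq_state d0 (map lbl es)"
proof -
  have "seq_state d0 ` interl X = {seq_state d0 (map lbl es)}"
    using seq_state_linearizations_eq[OF assms(1-4) _ assms(5)] assms(5)
    unfolding interl_eq_linearizations by blast
  then show ?thesis unfolding conf_state_def by simp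
qed

lemma is_config_causes_closed:
  assumes "is_config I X" and "e \<in> X" and "causes e' e"
  shows "e' \<in> X"
  using assms unfolding is_config_def by blast

lemma unf_events_hist:
  assumes "e \<in> unf_events F d0 I"
  shows "fset (hist e) \<subseteq> unf_events F d0 I" and "is_config I (fset (hist e))" and "lbl e \<in> F"
    and "\<forall>e'\<in>fset (hist e). is_maximal e' (fset (hist e)) \<longrightarrow> (lbl e, lbl e') \<notin> I"
  using assms by (cases; auto)+

lemma unf_events_not_causes_self:
  assumes "e \<in> unf_events F d0 I"
  shows "\<not> causes e e"
  using assms
proof induction
  case (add C f)
  then show ?case by (auto simp: causes_def)
qed

lemma unf_events_causes_trans:
  assumes "e \<in> unf_events F d0 I" and "causes y e" and "causes z y"
  shows "causes z e"
  using unf_events_hist(2)[OF assms(1)] assms(2,3) unfolding is_config_def causes_def by blast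

lemma unf_events_fcard_hist_less:
  assumes "e \<in> unf_events F d0 I" and "causes y e"
  shows "fcard (hist y) < fcard (hist e)"
proof (rule pfsubset_fcard_mono)
  have "y \<in> unf_events F d0 I"
    using unf_events_hist(1)[OF assms(1)] assms(2) by (auto simp: causes_def)
  then have "y |\<notin>| hist y" using unf_events_not_causes_self by (auto simp: causes_def)
  moreover have "hist y |\<subseteq>| hist e"
    using unf_events_causes_trans[OF assms] by (auto simp: causes_def)
  ultimately show "hist y |\<subset>| hist e" using assms(2) by (auto simp: causes_def)
qed

text \<open>Take an event above \<open>w\<close> whose history has maximal size.\<close>
lemma unf_events_maximal_above:
  assumes xP: "x \<in> unf_events F d0 I" and w: "w \<in> fset (hist x)"
  obtains m where "is_maximal m (fset (hist x))" and "w = m \<or> causes w m"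
proof -
  define S where "S = {m \<in> fset (hist x). w = m \<or> causes w m}"
  have fin: "finite S" unfolding S_def by simp
  obtain m where mS: "m \<in> S" and mmax: "\<And>m'. m' \<in> S \<Longrightarrow> fcard (hist m') \<le> fcard (hist m)"
    using Max_in[of "(\<lambda>m. fcard (hist m)) ` S"] Max_ge[of "(\<lambda>m. fcard (hist m)) ` S"] fin w
    unfolding S_def by fastforce
  have "is_maximal m (fset (hist x))"
    unfolding is_maximal_def
  proof (intro conjI notI)
    show "m \<in> fset (hist x)" using mS unfolding S_def by simp
    assume "\<exists>e''\<in>fset (hist x). causes m e''"
    then obtain e'' where e'': "e'' \<in> fset (hist x)" "causes m e''" by blast
    have e''P: "e'' \<in> unf_events F d0 I" using unf_events_hist(1)[OF xP] e'' by auto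
    have "e'' \<in> S"
      using mS e'' unf_events_causes_trans[OF e''P e''(2)] unfolding S_def by auto
    with mmax unf_events_fcard_hist_less[OF e''P e''(2)] show False by fastforce
  qed
  with mS that show ?thesis unfolding S_def by blast
qed

subsection \<open>The dependent past\<close>

lemma dependent_past_subset: "dependent_past I f X \<subseteq> X"
  unfolding dependent_past_def by auto

lemma dependent_past_memI: "d \<in> X \<Longrightarrow> (f, lbl d) \<notin> I \<Longrightarrow> d \<in> dependent_past I f X"
  unfolding dependent_past_def by blast

lemma dependent_past_causes_closed:
  assumes "unf_config F d0 I X" and "y \<in> dependent_past I f X" and "causes z y"
  shows "z \<in> dependent_past I f X"
proof -
  obtain d where d: "d \<in> X" "(f, lbl d) \<notin> I" "y = d \<or> causes y d"
    using assms(2) unfolding dependent_past_def by blast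
  have cfg: "is_config I X" and dP: "d \<in> unf_events F d0 I"
    using assms(1) d(1) unfolding unf_config_def by auto
  have "causes z d" using d(3) assms(3) unf_events_causes_trans[OF dP] by blast
  moreover from this have "z \<in> X" by (rule is_config_causes_closed[OF cfg d(1)])
  ultimately show ?thesis using d(1,2) unfolding dependent_past_def by blast
qed

lemma unf_config_dependent_past:
  assumes "unf_config F d0 I X"
  shows "unf_config F d0 I (dependent_past I f X)"
proof -
  let ?C = "dependent_past I f X"
  have X: "X \<subseteq> unf_events F d0 I" "is_config I X" using assms unfolding unf_config_def by auto
  have "finite X" using X(2) by (simp add: is_config_def)
  then have "finite ?C" by (rule finite_subset[OF dependent_past_subset])
  moreover have "\<forall>e\<in>?C. \<forall>e'. causes e' e \<longrightarrow> e' \<in> ?C"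
    using dependent_past_causes_closed[OF assms] by blast
  moreover have "\<forall>e\<in>?C. \<forall>e'\<in>?C. \<not> confl I e e'"
    using X(2) dependent_past_subset[of I f X] unfolding is_config_def by blast
  moreover have "?C \<subseteq> unf_events F d0 I" using X(1) dependent_past_subset[of I f X] by blast
  ultimately show ?thesis unfolding unf_config_def is_config_def by blast
qed

lemma dependent_past_maximal:
  assumes "is_maximal e (dependent_past I f X)"
  shows "(f, lbl e) \<notin> I"
proof -
  obtain d where d: "d \<in> X" "(f, lbl d) \<notin> I" "e = d \<or> causes e d"
    using assms unfolding is_maximal_def dependent_past_def by blast
  from d(1,2) have "d \<in> dependent_past I f X" by (rule dependent_past_memI)
  with assms d show ?thesis unfolding is_maximal_def by blast
qed

text \<open>The history of a maximal event \<open>x\<close> of a configuration is the dependent past of its label in the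
  rest: a dependent event not below \<open>x\<close> would be in immediate conflict with it.\<close>
lemma hist_eq_dependent_past:
  assumes IS: "sym I" and X: "unf_config F d0 I X"
    and xX: "x \<in> X" and mx: "\<forall>z\<in>X. \<not> causes x z"
  shows "fset (hist x) = dependent_past I (lbl x) (X - {x})"
proof
  have xP: "x \<in> unf_events F d0 I" using X xX unfolding unf_config_def by auto
  have below: "fset (hist x) \<subseteq> X - {x}"
    using X xX unf_events_not_causes_self[OF xP] unfolding unf_config_def is_config_def causes_def
    by auto
  show "fset (hist x) \<subseteq> dependent_past I (lbl x) (X - {x})"
  proof
    fix w assume w: "w \<in> fset (hist x)"
    obtain m where m: "is_maximal m (fset (hist x))" "w = m \<or> causes w m"
      using unf_events_maximal_above[OF xP w] by blast
    have "(lbl x, lbl m) \<notin> I" using unf_events_hist(4)[OF xP] m(1) by (auto simp: is_maximal_def)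
    moreover have "m \<in> X - {x}" "w \<in> X - {x}" using m(1) w below by (auto simp: is_maximal_def)
    ultimately show "w \<in> dependent_past I (lbl x) (X - {x})"
      using m(2) unfolding dependent_past_def by blast
  qed
  show "dependent_past I (lbl x) (X - {x}) \<subseteq> fset (hist x)"
  proof
    fix w assume "w \<in> dependent_past I (lbl x) (X - {x})"
    then obtain d where d: "d \<in> X - {x}" "(lbl x, lbl d) \<notin> I" "w = d \<or> causes w d"
      unfolding dependent_past_def by blast
    have "causes d x"
    proof (rule ccontr)
      assume "\<not> causes d x"
      moreover have "(lbl d, lbl x) \<notin> I" using d(2) IS by (auto dest: symD)
      ultimately have "confl I d x" using d(1) mx xX unfolding confl_def dconfl_def by blast
      then show False using X d(1) xX unfolding unf_config_def is_config_def by blast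
    qed
    then show "w \<in> fset (hist x)" using d(3) unf_events_causes_trans[OF xP] by (auto simp: causes_def)
  qed
qed

subsection \<open>Uniqueness\<close>

lemma unf_config_remove_last:
  assumes Z: "unf_config F d0 I Z" and "\<sigma> @ [f] \<in> interl Z"
  obtains x where "x \<in> Z" "lbl x = f" "\<forall>z\<in>Z. \<not> causes x z"
    "unf_config F d0 I (Z - {x})" "\<sigma> \<in> interl (Z - {x})"
proof -
  obtain ess where ess: "\<sigma> @ [f] = map lbl ess" "linearization ess Z"
    using assms(2) unfolding interl_eq_linearizations by blast
  then obtain es x where "ess = es @ [x]" by (cases ess rule: rev_cases) auto
  with ess have es: "\<sigma> = map lbl es" "f = lbl x" "linearization (es @ [x]) Z" by auto
  then have x: "x \<in> Z" "linearization es (Z - {x})" "\<forall>z\<in>Z - {x}. \<not> causes x z"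
    by (simp_all add: linearization_snoc)
  moreover have "\<not> causes x x"
    using Z x(1) unf_events_not_causes_self unfolding unf_config_def by blast
  ultimately have x: "x \<in> Z" "linearization es (Z - {x})" "\<forall>z\<in>Z. \<not> causes x z"
    by auto
  have "unf_config F d0 I (Z - {x})"
    using Z x(3) unfolding unf_config_def is_config_def by blast
  with x es that show ?thesis unfolding interl_eq_linearizations by blast
qed

lemma unf_config_interl_unique:
  assumes IS: "sym I"
    and "unf_config F d0 I X" and "\<sigma> \<in> interl X" and "unf_config F d0 I Y" and "\<sigma> \<in> interl Y"
  shows "X = Y"
  using assms(2-)
proof (induction \<sigma> arbitrary: X Y rule: rev_induct)
  case Nil
  then show ?case unfolding interl_eq_linearizations linearization_def by auto
next
  case (snoc f \<sigma>)
  obtain x where x: "x \<in> X" "lbl x = f" "\<forall>z\<in>X. \<not> causes x z"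
    "unf_config F d0 I (X - {x})" "\<sigma> \<in> interl (X - {x})"
    using unf_config_remove_last[OF snoc.prems(1,2)] .
  obtain y where y: "y \<in> Y" "lbl y = f" "\<forall>z\<in>Y. \<not> causes y z"
    "unf_config F d0 I (Y - {y})" "\<sigma> \<in> interl (Y - {y})"
    using unf_config_remove_last[OF snoc.prems(3,4)] .
  have rest: "X - {x} = Y - {y}" using snoc.IH[OF x(4,5) y(4,5)] .
  then have "fset (hist x) = fset (hist y)"
    using hist_eq_dependent_past[OF IS snoc.prems(1) x(1,3)]
      hist_eq_dependent_past[OF IS snoc.prems(3) y(1,3)] x(2) y(2)
    by simp
  then have "hist x = hist y" by (simp add: fset_inject)
  then have "x = y" using x(2) y(2) by (metis event.collapse)
  with rest x(1) y(1) show ?case by blast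
qed

subsection \<open>Existence\<close>

text \<open>A linearization of \<open>X\<close> may run the dependent past of \<open>f\<close> first; the remaining events are
  independent of \<open>f\<close>, so \<open>f\<close> can be moved in front of them.\<close>
lemma enabled_after_dependent_past:
  assumes AI: "analysis_instance F" and WI: "weak_indep F d0 I"
    and X: "unf_config F d0 I X" and es: "linearization es X"
    and run: "seq_state d0 (map lbl es @ [f]) \<noteq> bot"
  shows "f (conf_state d0 (dependent_past I f X)) \<noteq> bot"
proof -
  let ?C = "dependent_past I f X"
  have lblF: "lbl ` X \<subseteq> F" using X unf_events_hist(3) unfolding unf_config_def by blast
  have cf: "\<forall>e\<in>X. \<forall>e'\<in>X. \<not> confl I e e'" using X unfolding unf_config_def is_config_def by blast
  define ec where "ec = filter (\<lambda>x. x \<in> ?C) es"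
  define er where "er = filter (\<lambda>x. x \<notin> ?C) es"
  have ec: "linearization ec ?C"
    using es dependent_past_subset[of I f X] unfolding ec_def linearization_def
    by (auto intro: sorted_wrt_filter)
  have "linearization (ec @ er) X"
  proof -
    have "\<forall>x\<in>set ec. \<forall>y\<in>set er. \<not> causes y x"
      unfolding er_def using ec dependent_past_causes_closed[OF X] by (auto simp: linearization_def)
    with es ec show ?thesis unfolding ec_def er_def linearization_def
      by (auto simp: sorted_wrt_append intro: sorted_wrt_filter)
  qed
  then have "seq_state d0 (map lbl es) = seq_state d0 (map lbl ec @ map lbl er)"
    using seq_state_linearizations_eq[OF AI WI lblF cf es] by simp
  moreover have "seq_state d0 (map lbl ec @ f # map lbl er) = seq_state d0 (map lbl ec @ map lbl er @ [f])"
    using es lblF dependent_past_memI[of _ X f I]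
    unfolding ec_def er_def linearization_def by (intro seq_state_move_indep[OF AI WI]) auto
  ultimately have "seq_state d0 ((map lbl ec @ [f]) @ map lbl er) \<noteq> bot"
    using run by (simp add: seq_state_append)
  moreover have "set (map lbl er) \<subseteq> F"
    using es lblF unfolding er_def linearization_def by auto
  ultimately have enabled: "seq_state d0 (map lbl ec @ [f]) \<noteq> bot"
    by (rule seq_state_prefix_not_bot[OF AI, rotated])
  have "lbl ` ?C \<subseteq> F" "\<forall>e\<in>?C. \<forall>e'\<in>?C. \<not> confl I e e'"
    using lblF cf dependent_past_subset[of I f X] by blast+
  then have "conf_state d0 ?C = seq_state d0 (map lbl ec)"
    by (rule conf_state_eq_seq_state[OF AI WI _ _ ec])
  with enabled show ?thesis by (simp add: seq_state_append seq_state_def)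
qed

lemma Ev_dependent_past_in_unf_events:
  assumes AI: "analysis_instance F" and WI: "weak_indep F d0 I"
    and X: "unf_config F d0 I X" and es: "linearization es X"
    and run: "seq_state d0 (map lbl es @ [f]) \<noteq> bot" and fF: "f \<in> F"
    and C: "fset C = dependent_past I f X"
  shows "Ev f C \<in> unf_events F d0 I"
proof (rule unf_events.add)
  show "\<forall>e\<in>fset C. e \<in> unf_events F d0 I" "is_config I (fset C)"
    using unf_config_dependent_past[OF X] unfolding C unf_config_def by blast+
  show "f (conf_state d0 (fset C)) \<noteq> bot"
    using enabled_after_dependent_past[OF AI WI X es run] C by simp
  show "f \<in> F" by (fact fF)
  show "\<forall>e'\<in>fset C. is_maximal e' (fset C) \<longrightarrow> (f, lbl e') \<notin> I"
    unfolding C using dependent_past_maximal[of _ I f X] by blast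
qed

lemma unf_config_insert_event:
  assumes IS: "sym I" and X: "unf_config F d0 I X" and eP: "e \<in> unf_events F d0 I"
    and histe: "fset (hist e) = dependent_past I (lbl e) X"
  shows "unf_config F d0 I (insert e X)"
proof -
  have cfg: "is_config I X" using X unfolding unf_config_def by blast
  have hist_sub: "fset (hist e) \<subseteq> X" using histe dependent_past_subset by metis
  have below: "a \<in> insert e X" if "p \<in> insert e X" "a = p \<or> causes a p" for p a
    using that hist_sub is_config_causes_closed[OF cfg] unfolding causes_def by blast
  have e_dep: "causes b e" if "b \<in> X" "(lbl e, lbl b) \<notin> I" for b
    using dependent_past_memI[OF that] histe unfolding causes_def by simp
  have nodc: "\<not> dconfl I a b" if ab: "a \<in> insert e X" "b \<in> insert e X" for a b
  proof
    assume dc: "dconfl I a b"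
    consider "a \<in> X" "b \<in> X" | "a = e" "b \<in> X" | "a \<in> X" "b = e" | "a = e" "b = e"
      using ab by blast
    then show False
    proof cases
      case 1
      then have "confl I a b" using dc unfolding confl_def by blast
      with 1 cfg show False unfolding is_config_def by blast
    next
      case 2
      with dc e_dep show False unfolding dconfl_def by blast
    next
      case 3
      with dc IS e_dep show False unfolding dconfl_def by (blast dest: symD)
    next
      case 4
      with dc show False unfolding dconfl_def by blast
    qed
  qed
  have "\<not> confl I p q" if "p \<in> insert e X" "q \<in> insert e X" for p q
    using below[OF that(1)] below[OF that(2)] nodc unfolding confl_def by blast
  moreover have "finite (insert e X)" using cfg unfolding is_config_def by blast
  ultimately have "is_config I (insert e X)"
    using below unfolding is_config_def by blast
  with X eP show ?thesis unfolding unf_config_def by blast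
qed

lemma interl_insert:
  assumes "is_config I X" and "e \<notin> X" and "\<sigma> \<in> interl X"
  shows "\<sigma> @ [lbl e] \<in> interl (insert e X)"
proof -
  obtain es where "\<sigma> = map lbl es" "linearization es X"
    using assms(3) unfolding interl_eq_linearizations by blast
  moreover have "\<forall>y\<in>X. \<not> causes e y"
    using assms(1,2) is_config_causes_closed by blast
  ultimately have "\<sigma> @ [lbl e] = map lbl (es @ [e])" "linearization (es @ [e]) (insert e X)"
    using assms(2) by (simp_all add: linearization_snoc)
  then show ?thesis unfolding interl_eq_linearizations by blast
qed

lemma unf_config_interl_exists:
  assumes AI: "analysis_instance F" and WI: "weak_indep F d0 I"
  shows "\<sigma> \<in> runs F d0 \<Longrightarrow> \<exists>X. unf_config F d0 I X \<and> \<sigma> \<in> interl X"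
proof (induction \<sigma> rule: rev_induct)
  case Nil
  have "[] \<in> interl {}" unfolding interl_eq_linearizations linearization_def by auto
  then show ?case unfolding unf_config_def is_config_def by blast
next
  case (snoc f \<sigma>)
  have fF: "f \<in> F" and run: "set \<sigma> \<subseteq> F" "seq_state d0 (\<sigma> @ [f]) \<noteq> bot"
    using snoc.prems unfolding runs_def by auto
  then have "\<sigma> \<in> runs F d0"
    using seq_state_prefix_not_bot[OF AI, of "[f]"] unfolding runs_def by auto
  then obtain X where X: "unf_config F d0 I X" "\<sigma> \<in> interl X" using snoc.IH by blast
  then obtain es where es: "\<sigma> = map lbl es" "linearization es X"
    unfolding interl_eq_linearizations by blast
  have "finite (dependent_past I f X)"
    using unf_config_dependent_past[OF X(1)] unfolding unf_config_def is_config_def by blast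
  then obtain C where C: "fset C = dependent_past I f X" by (metis fset_to_fset)
  let ?e = "Ev f C"
  have "seq_state d0 (map lbl es @ [f]) \<noteq> bot" using run(2) es(1) by simp
  then have eP: "?e \<in> unf_events F d0 I"
    by (rule Ev_dependent_past_in_unf_events[OF AI WI X(1) es(2) _ fF C])
  have "?e \<notin> X"
  proof
    assume "?e \<in> X"
    moreover have "(f, f) \<notin> I" using WI unfolding weak_indep_def irrefl_def by auto
    ultimately have "?e \<in> fset (hist ?e)" using dependent_past_memI[of ?e X f I] C by simp
    with unf_events_not_causes_self[OF eP] show False unfolding causes_def by simp
  qed
  moreover have "sym I" using WI unfolding weak_indep_def by auto
  ultimately have "unf_config F d0 I (insert ?e X)" "\<sigma> @ [f] \<in> interl (insert ?e X)"
    using unf_config_insert_event[OF _ X(1) eP] interl_insert[of I X ?e \<sigma>] C X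
    unfolding unf_config_def by simp_all
  then show ?case by blast
qed

theorem theorem2:
  fixes F :: "('d::{lattice,order_bot} \<Rightarrow> 'd) set" and d0 :: 'd
    and I :: "('d \<Rightarrow> 'd) rel" and \<sigma> :: "('d \<Rightarrow> 'd) list"
  assumes "analysis_instance F"
    and "weak_indep F d0 I"
    and "\<sigma> \<in> runs F d0"
  shows "\<exists>!X. unf_config F d0 I X \<and> \<sigma> \<in> interl X"
proof -
  have "sym I" using assms(2) unfolding weak_indep_def by auto
  then show ?thesis
    using unf_config_interl_exists[OF assms] unf_config_interl_unique by blast
qed

end
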